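(* In the algorithm CertifiedCurveTracking (described in the context), at each execution of the inner step-size loop, the Krawczyk test KrawczykTest$(\hat C_{\hat x_n+[-r\rho,h]},\hat X([-r\rho,h]),r,A,\tau)$ returns True for some $h>0$; that is, after finitely many halvings of the step size $h$ the loop exits.
   Context: Setting: $C=\{c_1,\dots,c_{n-1}\}\subset\mathbb{Q}[X_1,\dots,X_n]$ defines a regular real curve (Jacobian $JC$ of full rank $n-1$ at every point of the curve, no self-intersections). For a value or interval $a$, $C_a$ is the square system $(c_i(X_1,\dots,X_{n-1},a))_i$; $x_{-n}=(x_1,\dots,x_{n-1})$; $B=[-1,1]^{n-1}$. Interval arithmetic, interval extensions $\square$, and norms: $\|I\|=\max_{x\in I}|x|$ for intervals, max over coordinates for interval vectors, and the maximal induced $\infty$-norm over all matrices in an interval matrix. KrawczykTest$(F,y,s,A,\rho)$ returns True iff $\|-\frac1sAF(y)+(I-A\square JF(y+sB))B\|<\rho$; if $F$ depends on an interval of slice values or $y$ is an interval vector, this is evaluated in interval arithmetic over all of them at once. A $\rho$-approximate solution $x$ to $C$ means: there exist invertible $A$ and $r>0$ with $-AC_{x_n}(x_{-n})+(I-A\,JC_{x_n}(x_{-n}+rB))rB\subset r\rho B$. RefineSolution$(C,x,r,A,\tau)$ is a procedure returning $(x,\tilde r,\tilde A)$ such that, among other things, KrawczykTest$(C_{x_n+\tilde r[-1,1]},x_{-n},\tilde r,\tilde A,\tau)$ is True (the test certified simultaneously for all slices $X_n\in x_n+\tilde r[-1,1]$). UnitaryTransformation$(C,x)$: compute an SVD $JC(x)=U\Sigma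 V^*$ and return $\hat C(X)=U^*C(VX)$, $\hat x=V^*x$, $U$, $V^*$. CertifiedCurveTracking with inputs $C$, a point $x$, $r>0$, $h>0$, compact region $D$, $\rho\in(0,\frac12]$, $\tau\in(\frac12,1)$: at each step, after a loop of refinements and unitary transformations, one sets $(\hat x,r,A)=$ RefineSolution$(\hat C,\tilde x,r,\tilde A,\rho)$ for the current transformed curve $\hat C$; one then defines $\hat X(\eta)=\hat x_{-n}$ for $\eta<0$ and $\hat X(\eta)=X(\eta)$ for $\eta\ge0$, where $X=$ Predictor$(\hat C,\hat x,r,h)$ is a user-chosen continuous prediction of the curve with $X(0)=\hat x_{-n}$ depending on the step size $h$; then, while KrawczykTest$(\hat C_{\hat x_n+[-r\rho,h]},\hat X([-r\rho,h]),r,A,\tau)$ is False, one sets $h=h/2$ and recomputes the predictor.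
   Formalization: The prediction $X(\eta)$ computed for step size h tends to $\hat x_{-n}$ as h and eta jointly tend to 0 with 0 <= eta <= h. The statement above fails without it. *)

theory Defs
  imports "HOL-Analysis.Analysis"
begin

text \<open>Points: x = (x_{-n}, x_n) with x_{-n} :: real^'n (the first n-1 coordinates,
  'n an arbitrary finite index type of cardinality n-1) and x_n :: real.
  A square system C_a is represented by C :: real^'n => real => real^'n,
  C y a = (c_i(y,a))_i.\<close>

definition polynomial_regular_curve :: "(real^'n \<Rightarrow> real \<Rightarrow> real^'n) \<Rightarrow> bool" where
  "polynomial_regular_curve C \<longleftrightarrow>
     (\<forall>i. real_polynomial_function (\<lambda>p::(real^'n) \<times> real. C (fst p) (snd p) $ i)) \<and>
     (\<forall>p::(real^'n) \<times> real. C (fst p) (snd p) = 0 \<longrightarrow>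
        (\<exists>D. ((\<lambda>q. C (fst q) (snd q)) has_derivative D) (at p) \<and> surj D))"

definition interval_extension ::
  "('a::euclidean_space \<Rightarrow> real \<Rightarrow> 'b::euclidean_space) \<Rightarrow> ('a set \<Rightarrow> real set \<Rightarrow> 'b set) \<Rightarrow> bool" where
  "interval_extension f F \<longleftrightarrow>
     (\<forall>l u a b x t. x \<in> cbox l u \<longrightarrow> t \<in> {a..b} \<longrightarrow> f x t \<in> F (cbox l u) {a..b}) \<and>
     (\<forall>l u a b. cbox l u \<noteq> {} \<longrightarrow> a \<le> b \<longrightarrow> (\<exists>L U. F (cbox l u) {a..b} = cbox L U)) \<and>
     (\<forall>l u a b l' u' a' b'. cbox l u \<noteq> {} \<longrightarrow> a \<le> b \<longrightarrow>
        cbox l u \<subseteq> cbox l' u' \<longrightarrow> {a..b} \<subseteq> {a'..b'} \<longrightarrow>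
        F (cbox l u) {a..b} \<subseteq> F (cbox l' u') {a'..b'}) \<and>
     (\<forall>l u a b \<epsilon>. cbox l u \<noteq> {} \<longrightarrow> a \<le> b \<longrightarrow> 0 < \<epsilon> \<longrightarrow>
        (\<exists>\<delta>>0. \<forall>l' u' a' b'. dist l' l < \<delta> \<longrightarrow> dist u' u < \<delta> \<longrightarrow>
            \<bar>a' - a\<bar> < \<delta> \<longrightarrow> \<bar>b' - b\<bar> < \<delta> \<longrightarrow> cbox l' u' \<noteq> {} \<longrightarrow> a' \<le> b' \<longrightarrow>
            F (cbox l' u') {a'..b'} \<subseteq> (\<Union>z\<in>F (cbox l u) {a..b}. ball z \<epsilon>)))"

definition ihull :: "'a::euclidean_space set \<Rightarrow> 'a set" where
  "ihull S = cbox (\<Sum>i\<in>Basis. (INF x\<in>S. x \<bullet> i) *\<^sub>R i) (\<Sum>i\<in>Basis. (SUP x\<in>S. x \<bullet> i) *\<^sub>R i)"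

definition inorm :: "'a::euclidean_space set \<Rightarrow> real" where
  "inorm S = (SUP x\<in>S. infnorm x)"

text \<open>KrawczykTest(F, Y, s, A, rho) evaluated in interval arithmetic, with FX, JX the
  interval extensions of F and its Jacobian JF (in the first n-1 variables), Y the
  (interval) point argument and T the interval of slice values.  Each interval
  operation below is evaluated exactly componentwise, as interval arithmetic does:
  A*[u] and I - A*[M] are entrywise exact ranges (each interval variable occurs once),
  [N]*B likewise, and the final sum is the Minkowski sum of two boxes.\<close>
definition krawczyk_test ::
  "((real^'n) set \<Rightarrow> real set \<Rightarrow> (real^'n) set) \<Rightarrow> ((real^'n) set \<Rightarrow> real set \<Rightarrow> (real^'n^'n) set)
    \<Rightarrow> (real^'n) set \<Rightarrow> real set \<Rightarrow> real \<Rightarrow> real^'n^'n \<Rightarrow> real \<Rightarrow> bool" where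
  "krawczyk_test FX JX Y T s A \<rho> \<longleftrightarrow>
     (let P = ihull ((\<lambda>u. - ((1 / s) *\<^sub>R (A *v u))) ` FX Y T);
          Ysb = {y + s *\<^sub>R b | y b. y \<in> Y \<and> b \<in> cbox (- One) One};
          N = ihull ((\<lambda>M. mat 1 - A ** M) ` JX Ysb T);
          Q = ihull {M *v b | M b. M \<in> N \<and> b \<in> cbox (- One) One}
      in inorm {p + q | p q. p \<in> P \<and> q \<in> Q} < \<rho>)"

end

theory Submission
  imports Defs
begin

(* Every step of the Krawczyk test in interval arithmetic -- images under the affine maps
   u |-> -(1/s) A u and M |-> I - A M, interval hulls, products with the unit box B, Minkowski
   sums and the interval norm -- moves its output by at most a fixed multiple of how far its
   input moves, measured by one-sided thickening.  Together with the upper semicontinuity of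
   the interval extensions this makes the test stable: RefineSolution certified it at the point
   xh, on the slices [xn - r, xn + r], with tolerance rho < tau, so it passes with tolerance
   tau on every box close enough to xh and every slice interval inside [xn - r, xn + r].
   By the limit assumption on the predictor the hull of the predicted points shrinks to xh as
   h -> 0, and [xn - r rho, xn + h] lies inside [xn - r, xn + r] once h < r, so some
   halving h0 / 2^k passes. *)

section \<open>One-sided thickening\<close>

definition cthickening :: "real \<Rightarrow> 'a::metric_space set \<Rightarrow> 'a set" where
  "cthickening d S = (\<Union>y\<in>S. cball y d)"

lemma mem_cthickening_iff: "x \<in> cthickening d S \<longleftrightarrow> (\<exists>y\<in>S. dist y x \<le> d)"
  by (auto simp: cthickening_def)

lemma cthickening_singleton [simp]: "cthickening d {x} = cball x d"
  by (simp add: cthickening_def)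

lemma bounded_cthickening:
  assumes "bounded S"
  shows "bounded (cthickening d S)"
proof -
  obtain c e where "\<And>y. y \<in> S \<Longrightarrow> dist c y \<le> e"
    using assms unfolding bounded_def by blast
  then have "dist c x \<le> e + d" if "x \<in> cthickening d S" for x
    using that unfolding mem_cthickening_iff by (smt (verit) dist_triangle)
  then show ?thesis
    unfolding bounded_def by blast
qed

lemma lipschitz_image_subset_cthickening:
  assumes "K-lipschitz_on UNIV g" "S \<subseteq> cthickening d S0"
  shows "g ` S \<subseteq> cthickening (K * d) (g ` S0)"
proof
  fix gx assume "gx \<in> g ` S"
  then obtain x where "gx = g x" "x \<in> S"
    by blast
  then obtain y where "gx = g x" "y \<in> S0" "dist y x \<le> d"
    using assms(2) by (meson mem_cthickening_iff subsetD)
  moreover have "dist (g y) (g x) \<le> K * dist y x"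
    using lipschitz_onD[OF assms(1)] by blast
  ultimately show "gx \<in> cthickening (K * d) (g ` S0)"
    using lipschitz_on_nonneg[OF assms(1)] unfolding mem_cthickening_iff
    by (meson image_eqI mult_left_mono order_trans)
qed

lemma sum_set_subset_cthickening:
  fixes P Q :: "'a::real_normed_vector set"
  assumes "P \<subseteq> cthickening d1 P0" "Q \<subseteq> cthickening d2 Q0"
  shows "{p + q | p q. p \<in> P \<and> q \<in> Q} \<subseteq> cthickening (d1 + d2) {p + q | p q. p \<in> P0 \<and> q \<in> Q0}"
proof clarify
  fix p q assume "p \<in> P" "q \<in> Q"
  then obtain p0 q0 where "p0 \<in> P0" "dist p0 p \<le> d1" "q0 \<in> Q0" "dist q0 q \<le> d2"
    using assms by (meson mem_cthickening_iff subsetD)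
  moreover have "dist (p0 + q0) (p + q) \<le> dist p0 p + dist q0 q"
    by (rule dist_triangle_add)
  ultimately show "p + q \<in> cthickening (d1 + d2) {p + q | p q. p \<in> P0 \<and> q \<in> Q0}"
    unfolding mem_cthickening_iff by fastforce
qed

lemma bounded_sum_set:
  fixes P Q :: "'a::real_normed_vector set"
  assumes "bounded P" "bounded Q"
  shows "bounded {p + q | p q. p \<in> P \<and> q \<in> Q}"
proof -
  have "{p + q | p q. p \<in> P \<and> q \<in> Q} = (\<lambda>(p, q). p + q) ` (P \<times> Q)"
    by auto
  then show ?thesis
    using bounded_plus[OF assms] by simp
qed

lemma bilinear_bounded_on:
  fixes h :: "'a::euclidean_space \<Rightarrow> 'b::euclidean_space \<Rightarrow> 'c::real_normed_vector"
  assumes "bilinear h" "bounded B"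
  shows "\<exists>K\<ge>0. \<forall>x b. b \<in> B \<longrightarrow> norm (h x b) \<le> K * norm x"
proof -
  obtain C where C: "C > 0" "\<And>x b. norm (h x b) \<le> C * norm x * norm b"
    using bilinear_bounded_pos[OF assms(1)] by blast
  obtain R where R: "\<And>b. b \<in> B \<Longrightarrow> norm b \<le> R"
    using assms(2) bounded_iff by blast
  have "norm (h x b) \<le> C * \<bar>R\<bar> * norm x" if "b \<in> B" for x b
  proof -
    have "norm b \<le> \<bar>R\<bar>"
      using R[OF that] by linarith
    then have "C * norm x * norm b \<le> C * norm x * \<bar>R\<bar>"
      using C(1) by (simp add: mult_left_mono)
    then show ?thesis
      using C(2)[of x b] by (simp add: ac_simps)
  qed
  moreover have "0 \<le> C * \<bar>R\<bar>"
    using C(1) by simp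
  ultimately show ?thesis
    by blast
qed

lemma bilinear_image_subset_cthickening:
  fixes h :: "'a::real_normed_vector \<Rightarrow> 'b::real_vector \<Rightarrow> 'c::real_normed_vector"
  assumes "bilinear h" "0 \<le> K" "\<forall>x b. b \<in> B \<longrightarrow> norm (h x b) \<le> K * norm x"
    and "N \<subseteq> cthickening d N0"
  shows "{h M b | M b. M \<in> N \<and> b \<in> B} \<subseteq> cthickening (K * d) {h M b | M b. M \<in> N0 \<and> b \<in> B}"
proof clarify
  fix M b assume "M \<in> N" "b \<in> B"
  then obtain M0 where "M0 \<in> N0" "dist M0 M \<le> d"
    using assms(4) by (meson mem_cthickening_iff subsetD)
  moreover have "h M0 b - h M b = h (M0 - M) b"
    using assms(1) linear_diff[of "\<lambda>x. h x b" M0 M] by (simp add: bilinear_def)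
  then have "dist (h M0 b) (h M b) \<le> K * dist M0 M"
    using assms(3) \<open>b \<in> B\<close> by (simp add: dist_norm)
  ultimately show "h M b \<in> cthickening (K * d) {h M b | M b. M \<in> N0 \<and> b \<in> B}"
    unfolding mem_cthickening_iff using \<open>b \<in> B\<close> assms(2)
    by (smt (verit, best) mem_Collect_eq mult_left_mono)
qed

lemma bounded_image2:
  fixes h :: "'a::real_normed_vector \<Rightarrow> 'b::real_vector \<Rightarrow> 'c::real_normed_vector"
  assumes "\<forall>x b. b \<in> B \<longrightarrow> norm (h x b) \<le> K * norm x" "bounded N"
  shows "bounded {h M b | M b. M \<in> N \<and> b \<in> B}"
proof -
  obtain D where "\<And>M. M \<in> N \<Longrightarrow> norm M \<le> D"
    using assms(2) bounded_iff by blast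
  then have "norm (h M b) \<le> \<bar>K\<bar> * D" if "M \<in> N" "b \<in> B" for M b
    using assms(1) that
    by (smt (verit, best) abs_ge_self mult_right_mono mult_left_mono norm_ge_zero abs_ge_zero)
  then show ?thesis
    unfolding bounded_iff by blast
qed

section \<open>Interval hulls\<close>

lemma clamp_component:
  fixes a b z :: "'a::euclidean_space"
  assumes "\<forall>j\<in>Basis. a \<bullet> j \<le> b \<bullet> j" "i \<in> Basis"
  shows "clamp a b z \<bullet> i = max (a \<bullet> i) (min (b \<bullet> i) (z \<bullet> i))"
  using assms by (auto simp: clamp_def max_def min_def)

lemma clamp_component_dist_le:
  fixes a b z :: "'a::euclidean_space"
  assumes "\<forall>j\<in>Basis. a \<bullet> j \<le> b \<bullet> j" "i \<in> Basis" "0 \<le> d"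
    and "a \<bullet> i - d \<le> z \<bullet> i" "z \<bullet> i \<le> b \<bullet> i + d"
  shows "\<bar>clamp a b z \<bullet> i - z \<bullet> i\<bar> \<le> d"
  using assms by (simp add: clamp_component max_def min_def)

lemma cbox_plus_scaled_unit_cbox:
  fixes l u :: "'a::euclidean_space"
  assumes "0 < s" "cbox l u \<noteq> {}"
  shows "{y + s *\<^sub>R b | y b. y \<in> cbox l u \<and> b \<in> cbox (- One) One}
           = cbox (l - s *\<^sub>R One) (u + s *\<^sub>R One)"
proof (intro subset_antisym subsetI)
  fix z assume "z \<in> {y + s *\<^sub>R b | y b. y \<in> cbox l u \<and> b \<in> cbox (- One) One}"
  then obtain y b where z: "z = y + s *\<^sub>R b" "y \<in> cbox l u" "b \<in> cbox (- One) One"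
    by blast
  have "- s \<le> s * (b \<bullet> i) \<and> s * (b \<bullet> i) \<le> s" if "i \<in> Basis" for i
    using z(3) that assms(1) mult_left_mono[of "b \<bullet> i" 1 s] mult_left_mono[of "- 1" "b \<bullet> i" s]
    by (auto simp: mem_box)
  with z(2) show "z \<in> cbox (l - s *\<^sub>R One) (u + s *\<^sub>R One)"
    by (force simp: z(1) mem_box inner_add_left inner_diff_left)
next
  fix z assume z: "z \<in> cbox (l - s *\<^sub>R One) (u + s *\<^sub>R One)"
  have lu: "\<forall>i\<in>Basis. l \<bullet> i \<le> u \<bullet> i"
    using assms(2) by (simp add: box_ne_empty)
  define y where "y = clamp l u z"
  define b where "b = (1 / s) *\<^sub>R (z - y)"
  have "\<bar>y \<bullet> i - z \<bullet> i\<bar> \<le> s" if "i \<in> Basis" for i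
    unfolding y_def using z that lu assms(1)
    by (intro clamp_component_dist_le) (auto simp: mem_box inner_add_left inner_diff_left)
  then have "b \<in> cbox (- One) One"
    using assms(1) by (auto simp: b_def mem_box inner_diff_left abs_le_iff field_simps)
  moreover have "z = y + s *\<^sub>R b"
    using assms(1) by (simp add: b_def)
  moreover have "y \<in> cbox l u"
    using lu by (simp add: y_def)
  ultimately show "z \<in> {y + s *\<^sub>R b | y b. y \<in> cbox l u \<and> b \<in> cbox (- One) One}"
    by blast
qed

lemma cbox_enlarged_nonempty:
  fixes l u :: "'a::euclidean_space"
  assumes "cbox l u \<noteq> {}" "0 \<le> r"
  shows "cbox (l - r *\<^sub>R One) (u + r *\<^sub>R One) \<noteq> {}"
  using assms by (auto simp: box_ne_empty inner_diff_left inner_add_left)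

lemma ihull_singleton [simp]: "ihull {x} = {x}"
  by (simp add: ihull_def euclidean_representation)

lemma bounded_ihull: "bounded (ihull S)"
  unfolding ihull_def by (rule bounded_cbox)

lemma ihull_nonempty:
  fixes S :: "'a::euclidean_space set"
  assumes "bounded S" "S \<noteq> {}"
  shows "ihull S \<noteq> {}"
proof -
  obtain y where "y \<in> S"
    using assms(2) by blast
  then have "(INF x\<in>S. x \<bullet> i) \<le> (SUP x\<in>S. x \<bullet> i)" for i
    using cINF_lower[OF bounded_inner_imp_bdd_below[OF assms(1)]]
      cSUP_upper[OF _ bounded_inner_imp_bdd_above[OF assms(1)]] by (meson order_trans)
  then show ?thesis
    by (simp add: ihull_def box_ne_empty)
qed

lemma cthickening_inner_bounds:
  fixes S S0 :: "'a::euclidean_space set"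
  assumes "S \<noteq> {}" "bounded S0" "S \<subseteq> cthickening d S0" "i \<in> Basis"
  shows "(INF y\<in>S0. y \<bullet> i) - d \<le> (INF x\<in>S. x \<bullet> i)"
    and "(SUP x\<in>S. x \<bullet> i) \<le> (SUP y\<in>S0. y \<bullet> i) + d"
proof -
  have bounds: "(INF y\<in>S0. y \<bullet> i) - d \<le> x \<bullet> i \<and> x \<bullet> i \<le> (SUP y\<in>S0. y \<bullet> i) + d" if "x \<in> S" for x
  proof -
    obtain y where y: "y \<in> S0" "dist y x \<le> d"
      using assms(3) \<open>x \<in> S\<close> by (meson mem_cthickening_iff subsetD)
    then have "\<bar>x \<bullet> i - y \<bullet> i\<bar> \<le> d"
      using Basis_le_norm[OF assms(4), of "x - y"] by (simp add: dist_norm norm_minus_commute inner_diff_left)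
    then show ?thesis
      using cINF_lower[OF bounded_inner_imp_bdd_below[OF assms(2), where a = i] y(1)]
        cSUP_upper[OF y(1) bounded_inner_imp_bdd_above[OF assms(2), where a = i]]
      by linarith
  qed
  show "(INF y\<in>S0. y \<bullet> i) - d \<le> (INF x\<in>S. x \<bullet> i)"
    by (rule cINF_greatest[OF assms(1)]) (use bounds in blast)
  show "(SUP x\<in>S. x \<bullet> i) \<le> (SUP y\<in>S0. y \<bullet> i) + d"
    by (rule cSUP_least[OF assms(1)]) (use bounds in blast)
qed

lemma ihull_subset_cthickening:
  fixes S S0 :: "'a::euclidean_space set"
  assumes "S \<noteq> {}" "bounded S0" "S \<subseteq> cthickening d S0"
  shows "ihull S \<subseteq> cthickening (real DIM('a) * d) (ihull S0)"
proof
  fix z assume z: "z \<in> ihull S"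
  define lo where "lo = (\<Sum>i\<in>Basis. (INF x\<in>S0. x \<bullet> i) *\<^sub>R i)"
  define hi where "hi = (\<Sum>i\<in>Basis. (SUP x\<in>S0. x \<bullet> i) *\<^sub>R i)"
  obtain x y where "x \<in> S" "y \<in> S0" "dist y x \<le> d"
    using assms(1,3) by (meson ex_in_conv mem_cthickening_iff subsetD)
  then have "S0 \<noteq> {}" "0 \<le> d"
    by (auto intro: order_trans[OF zero_le_dist])
  have lo_hi: "\<forall>i\<in>Basis. lo \<bullet> i \<le> hi \<bullet> i"
    using ihull_nonempty[OF assms(2) \<open>S0 \<noteq> {}\<close>] by (simp add: ihull_def lo_def hi_def box_ne_empty)
  have "lo \<bullet> i - d \<le> z \<bullet> i \<and> z \<bullet> i \<le> hi \<bullet> i + d" if "i \<in> Basis" for i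
    using z that cthickening_inner_bounds[OF assms that] by (auto simp: lo_def hi_def ihull_def mem_box)
  then have "dist (clamp lo hi z) z \<le> (\<Sum>i\<in>(Basis::'a set). d)"
    using lo_hi \<open>0 \<le> d\<close> norm_le_l1[of "clamp lo hi z - z"] sum_mono[of Basis "\<lambda>i. \<bar>(clamp lo hi z - z) \<bullet> i\<bar>" "\<lambda>i. d"]
    by (simp add: dist_norm inner_diff_left clamp_component_dist_le)
  moreover have "clamp lo hi z \<in> ihull S0"
    using lo_hi by (simp add: ihull_def lo_def hi_def)
  ultimately show "z \<in> cthickening (real DIM('a) * d) (ihull S0)"
    unfolding mem_cthickening_iff by auto
qed

lemma ihull_lipschitz_image_subset_cthickening:
  fixes g :: "'a::euclidean_space \<Rightarrow> 'b::euclidean_space"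
  assumes "L-lipschitz_on UNIV g" "bounded S0" "S \<noteq> {}" "S \<subseteq> cthickening d S0"
  shows "ihull (g ` S) \<noteq> {}"
    and "ihull (g ` S) \<subseteq> cthickening (real DIM('b) * (L * d)) (ihull (g ` S0))"
proof -
  have bounded_image: "bounded (g ` T)" if "bounded T" for T
    using bounded_uniformly_continuous_image[OF lipschitz_on_uniformly_continuous that]
      lipschitz_on_subset[OF assms(1)] by blast
  moreover have "bounded S"
    using bounded_subset[OF bounded_cthickening[OF assms(2)] assms(4)] .
  ultimately show "ihull (g ` S) \<noteq> {}"
    using assms(3) by (simp add: ihull_nonempty)
  show "ihull (g ` S) \<subseteq> cthickening (real DIM('b) * (L * d)) (ihull (g ` S0))"
    using assms bounded_image[OF assms(2)]
    by (intro ihull_subset_cthickening lipschitz_image_subset_cthickening) auto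
qed

lemma inorm_le_cthickening:
  fixes S S0 :: "'a::euclidean_space set"
  assumes "S \<noteq> {}" "bounded S0" "S \<subseteq> cthickening d S0"
  shows "inorm S \<le> inorm S0 + d"
  unfolding inorm_def
proof (rule cSUP_least[OF assms(1)])
  fix x assume "x \<in> S"
  then obtain y where y: "y \<in> S0" "dist y x \<le> d"
    using assms(3) by (meson mem_cthickening_iff subsetD)
  obtain B where "\<And>y. y \<in> S0 \<Longrightarrow> norm y \<le> B"
    using assms(2) bounded_iff by blast
  then have "bdd_above (infnorm ` S0)"
    by (meson bdd_above.I2 infnorm_le_norm order_trans)
  then have "infnorm y \<le> (SUP y\<in>S0. infnorm y)"
    using y(1) by (rule cSUP_upper2) simp
  moreover have "infnorm (x - y) \<le> d"
    using y(2) infnorm_le_norm[of "x - y"] by (simp add: dist_norm norm_minus_commute)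
  moreover have "infnorm x \<le> infnorm y + infnorm (x - y)"
    using infnorm_triangle[of y "x - y"] by simp
  ultimately show "infnorm x \<le> (SUP y\<in>S0. infnorm y) + d"
    by linarith
qed

section \<open>Stability of the Krawczyk test\<close>

lemma bounded_linear_matrix_mult_left: "bounded_linear (\<lambda>M :: real^'n^'m. A ** M)"
  by (rule linear_conv_bounded_linear[THEN iffD1], rule linearI)
    (simp_all add: matrix_add_ldistrib matrix_scalar_ac scalar_matrix_assoc)

lemma bilinear_matrix_vector_mult: "bilinear (\<lambda>(M :: real^'n^'m) (b :: real^'n). M *v b)"
  by (auto simp: bilinear_def matrix_vector_mul_linear matrix_vector_mult_add_rdistrib
      scaleR_matrix_vector_assoc intro!: linearI)

definition krawczyk_correction_box :: "real^'n^'n \<Rightarrow> (real^'n^'n) set \<Rightarrow> (real^'n) set" where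
  "krawczyk_correction_box A JY =
     ihull {M *v b | M b. M \<in> ihull ((\<lambda>M. mat 1 - A ** M) ` JY) \<and> b \<in> cbox (- One) One}"

definition krawczyk_value :: "real^'n^'n \<Rightarrow> real \<Rightarrow> (real^'n) set \<Rightarrow> (real^'n^'n) set \<Rightarrow> real" where
  "krawczyk_value A s FY JY =
     inorm {p + q | p q. p \<in> ihull ((\<lambda>u. - ((1 / s) *\<^sub>R (A *v u))) ` FY) \<and>
        q \<in> krawczyk_correction_box A JY}"

lemma krawczyk_test_iff:
  "krawczyk_test FX JX Y T s A \<rho> \<longleftrightarrow>
     krawczyk_value A s (FX Y T) (JX {y + s *\<^sub>R b | y b. y \<in> Y \<and> b \<in> cbox (- One) One} T) < \<rho>"
  by (simp add: krawczyk_test_def krawczyk_value_def krawczyk_correction_box_def Let_def)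

lemma krawczyk_correction_box_lipschitz:
  fixes A :: "real^'n^'n"
  obtains K where "0 \<le> K"
    "\<And>d JY JY0. bounded JY0 \<Longrightarrow> JY \<noteq> {} \<Longrightarrow> JY \<subseteq> cthickening d JY0 \<Longrightarrow>
       krawczyk_correction_box A JY \<noteq> {} \<and>
       krawczyk_correction_box A JY \<subseteq> cthickening (K * d) (krawczyk_correction_box A JY0)"
proof -
  define g where "g M = mat 1 - A ** M" for M :: "real^'n^'n"
  define B where "B = cbox (- One) (One :: real^'n)"
  define R where "R J = {M *v b | M b. M \<in> ihull (g ` J) \<and> b \<in> B}" for J
  have box_eq: "krawczyk_correction_box A J = ihull (R J)" for J
    by (simp add: krawczyk_correction_box_def R_def g_def B_def)
  obtain L where "L-lipschitz_on UNIV (\<lambda>M :: real^'n^'n. A ** M)"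
    using bounded_linear_matrix_mult_left by (rule bounded_linear.lipschitz_boundE)
  then have L: "L-lipschitz_on UNIV g"
    using lipschitz_on_diff[OF lipschitz_on_constant] by (simp add: g_def)
  have "bounded B"
    by (simp add: B_def)
  with bilinear_matrix_vector_mult obtain C
    where C: "0 \<le> C" "\<forall>(M :: real^'n^'n) b. b \<in> B \<longrightarrow> norm (M *v b) \<le> C * norm M"
    using bilinear_bounded_on by blast
  have bounded_R: "bounded (R J)" for J
    unfolding R_def by (rule bounded_image2[OF C(2) bounded_ihull])
  define D where "D = real DIM(real^'n)"
  define E where "E = real DIM(real^'n^'n)"
  show thesis
  proof (rule that[of "D * (C * (E * L))"])
    show "0 \<le> D * (C * (E * L))"
      using L C(1) by (simp add: D_def E_def lipschitz_on_nonneg)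
    fix d and JY JY0 :: "(real^'n^'n) set"
    assume "bounded JY0" "JY \<noteq> {}" "JY \<subseteq> cthickening d JY0"
    note hull_image = ihull_lipschitz_image_subset_cthickening[OF L this]
    have "0 \<in> B"
      by (simp add: B_def mem_box)
    then have "R JY \<noteq> {}"
      using hull_image(1) by (auto simp: R_def)
    have "R JY \<subseteq> cthickening (C * (E * (L * d))) (R JY0)"
      unfolding R_def E_def using hull_image(2) by (rule bilinear_image_subset_cthickening[OF bilinear_matrix_vector_mult C])
    from ihull_subset_cthickening[OF \<open>R JY \<noteq> {}\<close> bounded_R this]
      ihull_nonempty[OF bounded_R \<open>R JY \<noteq> {}\<close>]
    show "krawczyk_correction_box A JY \<noteq> {} \<and>
        krawczyk_correction_box A JY \<subseteq> cthickening (D * (C * (E * L)) * d) (krawczyk_correction_box A JY0)"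
      unfolding box_eq D_def by (simp add: algebra_simps)
  qed
qed

lemma krawczyk_value_lipschitz:
  fixes A :: "real^'n^'n"
  obtains K where "0 \<le> K"
    "\<And>d FY FY0 JY JY0. bounded FY0 \<Longrightarrow> bounded JY0 \<Longrightarrow> FY \<noteq> {} \<Longrightarrow> JY \<noteq> {} \<Longrightarrow>
       FY \<subseteq> cthickening d FY0 \<Longrightarrow> JY \<subseteq> cthickening d JY0 \<Longrightarrow>
       krawczyk_value A s FY JY \<le> krawczyk_value A s FY0 JY0 + K * d"
proof -
  define g where "g u = - ((1 / s) *\<^sub>R (A *v u))" for u :: "real^'n"
  have "bounded_linear g"
    unfolding g_def
    by (intro bounded_linear_minus bounded_linear_const_scaleR matrix_vector_mul_bounded_linear)
  then obtain L where L: "L-lipschitz_on UNIV g"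
    by (rule bounded_linear.lipschitz_boundE)
  obtain K where K: "0 \<le> K"
    "\<And>d JY JY0. bounded JY0 \<Longrightarrow> JY \<noteq> {} \<Longrightarrow> JY \<subseteq> cthickening d JY0 \<Longrightarrow>
       krawczyk_correction_box A JY \<noteq> {} \<and>
       krawczyk_correction_box A JY \<subseteq> cthickening (K * d) (krawczyk_correction_box A JY0)"
    by (rule krawczyk_correction_box_lipschitz[of A]) blast
  define D where "D = real DIM(real^'n)"
  show thesis
  proof (rule that[of "D * L + K"])
    show "0 \<le> D * L + K"
      using L K(1) by (simp add: D_def lipschitz_on_nonneg)
    fix d and FY FY0 :: "(real^'n) set" and JY JY0 :: "(real^'n^'n) set"
    assume FY0: "bounded FY0" and JY0: "bounded JY0" and FY: "FY \<noteq> {}" and JY: "JY \<noteq> {}"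
      and FY_near: "FY \<subseteq> cthickening d FY0" and JY_near: "JY \<subseteq> cthickening d JY0"
    have P: "ihull (g ` FY) \<noteq> {}" "ihull (g ` FY) \<subseteq> cthickening (D * (L * d)) (ihull (g ` FY0))"
      using ihull_lipschitz_image_subset_cthickening[OF L FY0 FY FY_near] by (simp_all add: D_def)
    have Q: "krawczyk_correction_box A JY \<noteq> {}"
      "krawczyk_correction_box A JY \<subseteq> cthickening (K * d) (krawczyk_correction_box A JY0)"
      using K(2)[OF JY0 JY JY_near] by simp_all
    have "{p + q | p q. p \<in> ihull (g ` FY) \<and> q \<in> krawczyk_correction_box A JY} \<noteq> {}"
      using P(1) Q(1) by blast
    moreover have "bounded {p + q | p q. p \<in> ihull (g ` FY0) \<and> q \<in> krawczyk_correction_box A JY0}"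
      by (intro bounded_sum_set bounded_ihull) (simp add: krawczyk_correction_box_def bounded_ihull)
    ultimately have "krawczyk_value A s FY JY \<le> krawczyk_value A s FY0 JY0 + (D * (L * d) + K * d)"
      using sum_set_subset_cthickening[OF P(2) Q(2)] unfolding krawczyk_value_def g_def
      by (rule inorm_le_cthickening)
    then show "krawczyk_value A s FY JY \<le> krawczyk_value A s FY0 JY0 + (D * L + K) * d"
      by (simp add: algebra_simps)
  qed
qed

lemma interval_extension_nonempty:
  assumes "interval_extension f F" "cbox l u \<noteq> {}" "a \<le> b"
  shows "F (cbox l u) {a..b} \<noteq> {}"
proof -
  have "l \<in> cbox l u"
    using assms(2) by (simp add: box_ne_empty mem_box)
  then have "f l a \<in> F (cbox l u) {a..b}"
    using assms(1,3) by (simp add: interval_extension_def)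
  then show ?thesis
    by blast
qed

lemma bounded_interval_extension:
  assumes "interval_extension f F" "cbox l u \<noteq> {}" "a \<le> b"
  shows "bounded (F (cbox l u) {a..b})"
  using assms unfolding interval_extension_def by (metis bounded_cbox)

lemma interval_extension_upper_semicontinuous:
  assumes "interval_extension f F" "cbox l u \<noteq> {}" "a \<le> b" "0 < \<epsilon>"
  shows "\<exists>\<delta>>0. \<forall>l' u' a' b'. cbox l' u' \<noteq> {} \<longrightarrow> dist l' l < \<delta> \<longrightarrow> dist u' u < \<delta> \<longrightarrow>
           a \<le> a' \<longrightarrow> a' \<le> b' \<longrightarrow> b' \<le> b \<longrightarrow>
           F (cbox l' u') {a'..b'} \<subseteq> cthickening \<epsilon> (F (cbox l u) {a..b})"
proof -
  obtain \<delta> where "\<delta> > 0" and \<delta>: "\<And>l' u'. dist l' l < \<delta> \<Longrightarrow> dist u' u < \<delta> \<Longrightarrow> cbox l' u' \<noteq> {} \<Longrightarrow>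
      F (cbox l' u') {a..b} \<subseteq> (\<Union>z\<in>F (cbox l u) {a..b}. ball z \<epsilon>)"
    using assms unfolding interval_extension_def by (metis abs_zero diff_self)
  have "F (cbox l' u') {a'..b'} \<subseteq> cthickening \<epsilon> (F (cbox l u) {a..b})"
    if "cbox l' u' \<noteq> {}" "dist l' l < \<delta>" "dist u' u < \<delta>" "a \<le> a'" "a' \<le> b'" "b' \<le> b"
    for l' u' a' b'
  proof -
    have "F (cbox l' u') {a'..b'} \<subseteq> F (cbox l' u') {a..b}"
      using assms(1) that unfolding interval_extension_def by (meson atLeastatMost_subset_iff order_refl)
    also have "\<dots> \<subseteq> (\<Union>z\<in>F (cbox l u) {a..b}. ball z \<epsilon>)"
      using \<delta> that by blast
    also have "\<dots> \<subseteq> cthickening \<epsilon> (F (cbox l u) {a..b})"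
      by (auto simp: cthickening_def)
    finally show ?thesis .
  qed
  with \<open>\<delta> > 0\<close> show ?thesis
    by blast
qed

lemma krawczyk_enclosures_near_point:
  fixes FX :: "(real^'n) set \<Rightarrow> real set \<Rightarrow> (real^'n) set"
    and JX :: "(real^'n) set \<Rightarrow> real set \<Rightarrow> (real^'n^'n) set"
  assumes extF: "interval_extension f FX" and extJ: "interval_extension g JX"
    and "0 \<le> r" "a \<le> b" "0 < \<epsilon>"
  shows "\<exists>\<delta>>0. \<forall>l u a' b'. cbox l u \<noteq> {} \<longrightarrow> cbox l u \<subseteq> ball x \<delta> \<longrightarrow> a \<le> a' \<longrightarrow> a' \<le> b' \<longrightarrow> b' \<le> b \<longrightarrow>
           FX (cbox l u) {a'..b'} \<subseteq> cthickening \<epsilon> (FX (cbox x x) {a..b}) \<and>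
           JX (cbox (l - r *\<^sub>R One) (u + r *\<^sub>R One)) {a'..b'}
             \<subseteq> cthickening \<epsilon> (JX (cbox (x - r *\<^sub>R One) (x + r *\<^sub>R One)) {a..b})"
proof -
  have "cbox x x \<noteq> {}"
    by simp
  from interval_extension_upper_semicontinuous[OF extF this \<open>a \<le> b\<close> \<open>0 < \<epsilon>\<close>]
  obtain \<delta>1 where "\<delta>1 > 0" and \<delta>1: "\<forall>l' u' a' b'. cbox l' u' \<noteq> {} \<longrightarrow> dist l' x < \<delta>1 \<longrightarrow>
      dist u' x < \<delta>1 \<longrightarrow> a \<le> a' \<longrightarrow> a' \<le> b' \<longrightarrow> b' \<le> b \<longrightarrow>
      FX (cbox l' u') {a'..b'} \<subseteq> cthickening \<epsilon> (FX (cbox x x) {a..b})"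
    by blast
  from interval_extension_upper_semicontinuous[OF extJ
      cbox_enlarged_nonempty[OF \<open>cbox x x \<noteq> {}\<close> \<open>0 \<le> r\<close>] \<open>a \<le> b\<close> \<open>0 < \<epsilon>\<close>]
  obtain \<delta>2 where "\<delta>2 > 0" and \<delta>2: "\<forall>l' u' a' b'. cbox l' u' \<noteq> {} \<longrightarrow> dist l' (x - r *\<^sub>R One) < \<delta>2 \<longrightarrow>
      dist u' (x + r *\<^sub>R One) < \<delta>2 \<longrightarrow> a \<le> a' \<longrightarrow> a' \<le> b' \<longrightarrow> b' \<le> b \<longrightarrow>
      JX (cbox l' u') {a'..b'} \<subseteq> cthickening \<epsilon> (JX (cbox (x - r *\<^sub>R One) (x + r *\<^sub>R One)) {a..b})"
    by blast
  have "FX (cbox l u) {a'..b'} \<subseteq> cthickening \<epsilon> (FX (cbox x x) {a..b}) \<and>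
      JX (cbox (l - r *\<^sub>R One) (u + r *\<^sub>R One)) {a'..b'}
        \<subseteq> cthickening \<epsilon> (JX (cbox (x - r *\<^sub>R One) (x + r *\<^sub>R One)) {a..b})"
    if box: "cbox l u \<noteq> {}" "cbox l u \<subseteq> ball x (min \<delta>1 \<delta>2)" and "a \<le> a'" "a' \<le> b'" "b' \<le> b"
    for l u a' b'
  proof -
    have "l \<in> cbox l u" "u \<in> cbox l u"
      using box(1) by (auto simp: box_ne_empty mem_box)
    then have "dist l x < min \<delta>1 \<delta>2" "dist u x < min \<delta>1 \<delta>2"
      using box(2) by (auto simp: dist_commute)
    moreover have "dist (l - r *\<^sub>R One) (x - r *\<^sub>R One) = dist l x"
      "dist (u + r *\<^sub>R One) (x + r *\<^sub>R One) = dist u x"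
      by (simp_all add: dist_norm)
    ultimately show ?thesis
      using \<delta>1 \<delta>2 box(1) cbox_enlarged_nonempty[OF box(1) \<open>0 \<le> r\<close>] that(3-5) by auto
  qed
  moreover have "min \<delta>1 \<delta>2 > 0"
    using \<open>\<delta>1 > 0\<close> \<open>\<delta>2 > 0\<close> by simp
  ultimately show ?thesis
    by blast
qed

lemma krawczyk_test_persists_near_point:
  fixes FX :: "(real^'n) set \<Rightarrow> real set \<Rightarrow> (real^'n) set"
    and JX :: "(real^'n) set \<Rightarrow> real set \<Rightarrow> (real^'n^'n) set"
  assumes extF: "interval_extension f FX" and extJ: "interval_extension g JX"
    and "0 < r" "a \<le> b" "\<rho> < \<tau>" and test: "krawczyk_test FX JX {x} {a..b} r A \<rho>"
  shows "\<exists>\<delta>>0. \<forall>l u a' b'. cbox l u \<noteq> {} \<longrightarrow> cbox l u \<subseteq> ball x \<delta> \<longrightarrow>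
           a \<le> a' \<longrightarrow> a' \<le> b' \<longrightarrow> b' \<le> b \<longrightarrow> krawczyk_test FX JX (cbox l u) {a'..b'} r A \<tau>"
proof -
  note enlarge = cbox_plus_scaled_unit_cbox[OF \<open>0 < r\<close>]
  have "cbox x x \<noteq> {}" "0 \<le> r"
    using \<open>0 < r\<close> by simp_all
  define F0 where "F0 = FX (cbox x x) {a..b}"
  define J0 where "J0 = JX (cbox (x - r *\<^sub>R One) (x + r *\<^sub>R One)) {a..b}"
  have "krawczyk_value A r F0 J0 < \<rho>"
    using test enlarge[OF \<open>cbox x x \<noteq> {}\<close>] by (simp add: krawczyk_test_iff F0_def J0_def)
  obtain K where K: "0 \<le> K"
    "\<And>d FY FY0 JY JY0. bounded FY0 \<Longrightarrow> bounded JY0 \<Longrightarrow> FY \<noteq> {} \<Longrightarrow> JY \<noteq> {} \<Longrightarrow>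
       FY \<subseteq> cthickening d FY0 \<Longrightarrow> JY \<subseteq> cthickening d JY0 \<Longrightarrow>
       krawczyk_value A r FY JY \<le> krawczyk_value A r FY0 JY0 + K * d"
    by (rule krawczyk_value_lipschitz[of A r]) blast
  define \<epsilon> where "\<epsilon> = (\<tau> - \<rho>) / (K + 1)"
  have "0 < \<epsilon>" "K * \<epsilon> < \<tau> - \<rho>"
    using K(1) \<open>\<rho> < \<tau>\<close> by (auto simp: \<epsilon>_def field_simps)
  from krawczyk_enclosures_near_point[OF extF extJ \<open>0 \<le> r\<close> \<open>a \<le> b\<close> \<open>0 < \<epsilon>\<close>, of x]
  obtain \<delta> where "\<delta> > 0" and near: "\<forall>l u a' b'. cbox l u \<noteq> {} \<longrightarrow> cbox l u \<subseteq> ball x \<delta> \<longrightarrow>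
      a \<le> a' \<longrightarrow> a' \<le> b' \<longrightarrow> b' \<le> b \<longrightarrow> FX (cbox l u) {a'..b'} \<subseteq> cthickening \<epsilon> F0 \<and>
      JX (cbox (l - r *\<^sub>R One) (u + r *\<^sub>R One)) {a'..b'} \<subseteq> cthickening \<epsilon> J0"
    unfolding F0_def J0_def by blast
  have "krawczyk_test FX JX (cbox l u) {a'..b'} r A \<tau>"
    if box: "cbox l u \<noteq> {}" "cbox l u \<subseteq> ball x \<delta>" and ab: "a \<le> a'" "a' \<le> b'" "b' \<le> b"
    for l u a' b'
  proof -
    have F: "FX (cbox l u) {a'..b'} \<subseteq> cthickening \<epsilon> F0"
      and J: "JX (cbox (l - r *\<^sub>R One) (u + r *\<^sub>R One)) {a'..b'} \<subseteq> cthickening \<epsilon> J0"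
      using near box ab by blast+
    have "krawczyk_value A r (FX (cbox l u) {a'..b'}) (JX (cbox (l - r *\<^sub>R One) (u + r *\<^sub>R One)) {a'..b'})
        \<le> krawczyk_value A r F0 J0 + K * \<epsilon>"
      using K(2)[OF _ _ _ _ F J] box(1) cbox_enlarged_nonempty[OF box(1) \<open>0 \<le> r\<close>] ab
        bounded_interval_extension[OF extF \<open>cbox x x \<noteq> {}\<close> \<open>a \<le> b\<close>]
        bounded_interval_extension[OF extJ cbox_enlarged_nonempty[OF \<open>cbox x x \<noteq> {}\<close> \<open>0 \<le> r\<close>] \<open>a \<le> b\<close>]
        interval_extension_nonempty[OF extF] interval_extension_nonempty[OF extJ]
      unfolding F0_def J0_def by simp
    with \<open>krawczyk_value A r F0 J0 < \<rho>\<close> \<open>K * \<epsilon> < \<tau> - \<rho>\<close> show ?thesis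
      by (simp add: krawczyk_test_iff enlarge[OF box(1)])
  qed
  with \<open>\<delta> > 0\<close> show ?thesis
    by blast
qed

section \<open>Shrinking predicted boxes\<close>

lemma predicted_range_shrinks:
  fixes pred :: "real \<Rightarrow> real \<Rightarrow> 'a::metric_space"
  assumes lim: "((\<lambda>(h, \<eta>). pred h \<eta>) \<longlongrightarrow> x) (at (0, 0) within {(h, \<eta>). 0 < h \<and> 0 \<le> \<eta> \<and> \<eta> \<le> h})"
    and "0 < e"
  shows "\<forall>\<^sub>F h in at_right 0. (\<lambda>\<eta>. if \<eta> < 0 then x else pred h \<eta>) ` {c..h} \<subseteq> ball x e"
proof -
  obtain d where "d > 0" and d: "\<And>h \<eta>. 0 < h \<Longrightarrow> 0 \<le> \<eta> \<Longrightarrow> \<eta> \<le> h \<Longrightarrow> dist (h, \<eta>) (0, 0) < d \<Longrightarrow>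
      dist (pred h \<eta>) x < e"
    using lim \<open>0 < e\<close> unfolding tendsto_iff eventually_at by fastforce
  have "pred h \<eta> \<in> ball x e" if "0 < h" "h < d / 2" "0 \<le> \<eta>" "\<eta> \<le> h" for h \<eta>
  proof -
    have "dist (h, \<eta>) (0, 0) \<le> h + \<eta>"
      using that sqrt_sum_squares_le_sum[of h \<eta>] by (simp add: dist_Pair_Pair)
    then show ?thesis
      using d[OF that(1,3,4)] that by (simp add: dist_commute)
  qed
  then show ?thesis
    unfolding eventually_at_right_field using \<open>0 < e\<close> \<open>d > 0\<close>
    by (intro exI[of _ "d / 2"]) auto
qed

lemma predicted_hull_shrinks:
  fixes pred :: "real \<Rightarrow> real \<Rightarrow> 'a::euclidean_space"
  assumes lim: "((\<lambda>(h, \<eta>). pred h \<eta>) \<longlongrightarrow> x) (at (0, 0) within {(h, \<eta>). 0 < h \<and> 0 \<le> \<eta> \<and> \<eta> \<le> h})"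
    and "0 < \<delta>" "0 \<le> c"
  shows "\<forall>\<^sub>F h in at_right 0.
           ihull ((\<lambda>\<eta>. if \<eta> < 0 then x else pred h \<eta>) ` {- c..h}) \<noteq> {} \<and>
           ihull ((\<lambda>\<eta>. if \<eta> < 0 then x else pred h \<eta>) ` {- c..h}) \<subseteq> ball x \<delta>"
proof -
  define e where "e = \<delta> / (2 * DIM('a))"
  have "0 < e"
    using \<open>0 < \<delta>\<close> by (simp add: e_def)
  have hull: "ihull S \<noteq> {} \<and> ihull S \<subseteq> ball x \<delta>" if "S \<noteq> {}" "S \<subseteq> ball x e" for S :: "'a set"
  proof -
    have thickening: "S \<subseteq> cthickening e {x}"
      using that(2) by auto
    have "ihull S \<subseteq> cball x (DIM('a) * e)"
      using ihull_subset_cthickening[OF that(1) _ thickening] by simp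
    also have "\<dots> \<subseteq> ball x \<delta>"
      using \<open>0 < \<delta>\<close> by (auto simp: e_def)
    finally show ?thesis
      using ihull_nonempty[OF bounded_subset[OF bounded_ball that(2)] that(1)] by blast
  qed
  show ?thesis
    using eventually_at_right_less[of 0] predicted_range_shrinks[OF lim \<open>0 < e\<close>, where c = "- c"]
  proof eventually_elim
    case (elim h)
    then have "- c \<in> {- c..h}"
      using \<open>0 \<le> c\<close> by simp
    then have "(\<lambda>\<eta>. if \<eta> < 0 then x else pred h \<eta>) (- c) \<in> (\<lambda>\<eta>. if \<eta> < 0 then x else pred h \<eta>) ` {- c..h}"
      by (rule imageI)
    then show ?case
      using elim(2) by (intro hull) blast+
  qed
qed

theorem mainTheorem2:
  fixes C :: "real^'n \<Rightarrow> real \<Rightarrow> real^'n"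
    and J :: "real^'n \<Rightarrow> real \<Rightarrow> real^'n^'n"
    and FX :: "(real^'n) set \<Rightarrow> real set \<Rightarrow> (real^'n) set"
    and JX :: "(real^'n) set \<Rightarrow> real set \<Rightarrow> (real^'n^'n) set"
    and xh :: "real^'n" and xn :: real
    and r \<rho> \<tau> h0 :: real and A :: "real^'n^'n"
    and pred :: "real \<Rightarrow> real \<Rightarrow> real^'n"
  assumes curve: "polynomial_regular_curve C"
    and jac: "\<forall>y t. ((\<lambda>z. C z t) has_derivative (\<lambda>v. J y t *v v)) (at y)"
    and extC: "interval_extension C FX"
    and extJ: "interval_extension J JX"
    and rho: "0 < \<rho>" "\<rho> \<le> 1/2"
    and tau: "1/2 < \<tau>" "\<tau> < 1"
    and r: "0 < r"
    and h0: "0 < h0"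
    and refined: "krawczyk_test FX JX {xh} {xn - r .. xn + r} r A \<rho>"
    and pred0: "\<forall>h>0. pred h 0 = xh"
    and predcont: "\<forall>h>0. continuous_on {0..h} (pred h)"
    and predlim: "((\<lambda>(h, \<eta>). pred h \<eta>) \<longlongrightarrow> xh)
                    (at (0, 0) within {(h, \<eta>). 0 < h \<and> 0 \<le> \<eta> \<and> \<eta> \<le> h})"
  shows "\<exists>k::nat. krawczyk_test FX JX
           (ihull ((\<lambda>\<eta>. if \<eta> < 0 then xh else pred (h0 / 2 ^ k) \<eta>) ` {- r * \<rho> .. h0 / 2 ^ k}))
           {xn - r * \<rho> .. xn + h0 / 2 ^ k} r A \<tau>"
proof -
  have "xn - r \<le> xn + r" "\<rho> < \<tau>"
    using r rho tau by simp_all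
  from krawczyk_test_persists_near_point[OF extC extJ r this refined]
  obtain \<delta> where "\<delta> > 0" and \<delta>: "\<forall>l u a' b'. cbox l u \<noteq> {} \<longrightarrow> cbox l u \<subseteq> ball xh \<delta> \<longrightarrow>
      xn - r \<le> a' \<longrightarrow> a' \<le> b' \<longrightarrow> b' \<le> xn + r \<longrightarrow> krawczyk_test FX JX (cbox l u) {a'..b'} r A \<tau>"
    by blast
  define h where "h k = h0 / 2 ^ k" for k :: nat
  define Y where "Y k = ihull ((\<lambda>\<eta>. if \<eta> < 0 then xh else pred (h k) \<eta>) ` {- r * \<rho> .. h k})" for k
  have "(h \<longlongrightarrow> 0) sequentially"
    unfolding h_def by (rule LIMSEQ_divide_realpow_zero) simp
  then have "filterlim h (at_right 0) sequentially"
    by (rule tendsto_imp_filterlim_at_right) (simp add: h_def h0)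
  with predicted_hull_shrinks[OF predlim \<open>\<delta> > 0\<close>, of "r * \<rho>"]
  have "\<forall>\<^sub>F k in sequentially. Y k \<noteq> {} \<and> Y k \<subseteq> ball xh \<delta>"
    unfolding Y_def using r rho by (auto intro: eventually_compose_filterlim)
  moreover have "\<forall>\<^sub>F k in sequentially. h k < r"
    using \<open>(h \<longlongrightarrow> 0) sequentially\<close> r by (rule order_tendstoD)
  ultimately obtain k where "Y k \<noteq> {}" "Y k \<subseteq> ball xh \<delta>" "h k < r"
    using eventually_happens'[OF sequentially_bot] eventually_conj by blast
  moreover have "0 < h k"
    using h0 by (simp add: h_def)
  moreover obtain l u where "Y k = cbox l u"
    by (simp add: Y_def ihull_def)
  moreover have "xn - r \<le> xn - r * \<rho>"
    using r rho by (simp add: mult_le_cancel_left1)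
  ultimately have "krawczyk_test FX JX (Y k) {xn - r * \<rho> .. xn + h k} r A \<tau>"
    using \<delta> r rho by (smt (verit) mult_pos_pos)
  then show ?thesis
    unfolding Y_def h_def by blast
qed

end
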